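(* Let $0<e<d$ be coprime integers and let $e'$ be the unique integer with $0<e'<d$ and $ee'\equiv1\pmod d$. Let $J=\{(i,j)\in\mathbb{Z}_{\ge0}^2\setminus\{(0,0)\}: i+ej\equiv0\pmod d,\ i<e,\ j<e'\}$. Then $|J|\le1$ if and only if $e$ divides $d+1$. *)

theory Defs
  imports Main "HOL-Number_Theory.Cong"
begin

end

theory Submission
  imports Defs
begin

text \<open>For \<open>e > 1\<close> the corner \<open>(e - 1, e' - 1)\<close> lies in the box, since \<open>e(e' - 1) + e - 1 = e e' - 1\<close>.
  If \<open>e\<close> does not divide \<open>d + 1\<close>, the division \<open>d = e q + r\<close> gives a second point \<open>(r, q)\<close>,
  distinct from the corner because \<open>r \<noteq> e - 1\<close>. If \<open>e > 1\<close> divides \<open>d + 1\<close>, then \<open>e e' = d + 1\<close>,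
  so every point of the box has \<open>0 < i + e j \<le> d\<close>; being a multiple of \<open>d\<close> it equals \<open>d\<close>,
  which forces \<open>(i, j)\<close> to be the corner. For \<open>e = 1\<close> the box is empty.\<close>

definition box_solutions :: "int \<Rightarrow> int \<Rightarrow> int \<Rightarrow> (int \<times> int) set" where
  "box_solutions d e e' = {(i, j). 0 \<le> i \<and> 0 \<le> j \<and> (i, j) \<noteq> (0, 0)
      \<and> [i + e * j = 0] (mod d) \<and> i < e \<and> j < e'}"

lemma finite_box_solutions: "finite (box_solutions d e e')"
  by (rule finite_subset[of _ "{0..<e} \<times> {0..<e'}"]) (auto simp: box_solutions_def)

lemma corner_in_box_solutions:
  fixes d e e' :: int
  assumes "1 < e" and "0 < e'" and "[e * e' = 1] (mod d)"
  shows "(e - 1, e' - 1) \<in> box_solutions d e e'"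
proof -
  have "[e - 1 + e * (e' - 1) = 0] (mod d)"
    using cong_diff[OF assms(3) cong_refl[of 1]] by (simp add: algebra_simps)
  with assms(1,2) show ?thesis
    by (simp add: box_solutions_def)
qed

lemma dvd_succ_if_mod_eq_pred:
  fixes d e :: int
  assumes "d mod e = e - 1"
  shows "e dvd d + 1"
proof -
  have "d + 1 = e * (d div e) + d mod e + 1"
    by simp
  also have "\<dots> = e * (d div e + 1)"
    using assms by (simp add: distrib_left)
  finally show ?thesis
    by simp
qed

lemma less_mult_inverse:
  fixes d e e' :: int
  assumes "1 < e" and "0 < e'" and "[e * e' = 1] (mod d)"
  shows "d < e * e'"
proof -
  have "d dvd e * e' - 1"
    using assms(3) by (simp add: cong_iff_dvd_diff cong_sym_eq)
  moreover have "e \<le> e * e'"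
    using assms(1,2) by simp
  ultimately show ?thesis
    using assms(1) zdvd_imp_le[of d "e * e' - 1"] by linarith
qed

lemma division_in_box_solutions:
  fixes d e e' :: int
  assumes "0 < e" and "e < d" and "d < e * e'"
  shows "(d mod e, d div e) \<in> box_solutions d e e'"
proof -
  have "e * (d div e) \<le> d"
    using assms(1) pos_mod_sign[of e d] by (simp add: minus_mod_eq_mult_div[symmetric])
  then have "e * (d div e) < e * e'"
    using assms(3) by linarith
  then have "d div e < e'"
    using assms(1) by (simp add: mult_less_cancel_left_pos)
  moreover have "1 \<le> d div e"
    using assms(1,2) pos_imp_zdiv_pos_iff[of e d] by simp
  moreover have "d mod e + e * (d div e) = d"
    by simp
  ultimately show ?thesis
    using assms(1) by (simp add: box_solutions_def cong_0_iff)
qed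

lemma box_solutions_one_eq_empty:
  fixes d e' :: int
  assumes "e' \<le> d"
  shows "box_solutions d 1 e' = {}"
  using assms by (auto simp: box_solutions_def cong_0_iff dest: zdvd_imp_le)

lemma box_solutions_subset_corner:
  fixes d e e' :: int
  assumes "0 < e" and "e * e' = d + 1"
  shows "box_solutions d e e' \<subseteq> {(e - 1, e' - 1)}"
proof
  fix x assume "x \<in> box_solutions d e e'"
  then obtain i j where x: "x = (i, j)" and "0 \<le> i" "0 \<le> j" "(i, j) \<noteq> (0, 0)"
    and "d dvd i + e * j" and "i < e" and "j < e'"
    by (auto simp: box_solutions_def cong_0_iff)
  have "0 < i + e * j"
  proof (cases "j = 0")
    case True
    then show ?thesis
      using \<open>0 \<le> i\<close> \<open>(i, j) \<noteq> (0, 0)\<close> by simp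
  next
    case False
    then show ?thesis
      using \<open>0 \<le> i\<close> \<open>0 \<le> j\<close> assms(1) mult_pos_pos[of e j] by linarith
  qed
  moreover have "i + e * j \<le> d"
  proof -
    have "e * j \<le> e * (e' - 1)"
      using \<open>j < e'\<close> assms(1) by simp
    then show ?thesis
      using \<open>i < e\<close> assms(2) by (simp add: algebra_simps)
  qed
  ultimately have "i + e * j = d"
    using \<open>d dvd i + e * j\<close> by (metis zdvd_imp_le order_antisym_conv)
  then have "i + 1 = e * (e' - j)"
    using assms(2) by (simp add: algebra_simps)
  moreover have "0 < e * (e' - j)" and "e * (e' - j) \<le> e * 1"
    using calculation \<open>0 \<le> i\<close> \<open>i < e\<close> by linarith+
  ultimately have "e' - j = 1"
    using assms(1) by (simp add: zero_less_mult_iff)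
  then show "x \<in> {(e - 1, e' - 1)}"
    using x \<open>i + 1 = e * (e' - j)\<close> by simp
qed

lemma mult_inverse_eq_succ:
  fixes d e e' k :: int
  assumes "1 < e" and "coprime e d" and "0 < e'" and "e' < d"
    and "[e * e' = 1] (mod d)" and "d + 1 = e * k"
  shows "e * e' = d + 1"
proof -
  have "0 < e * k"
    using assms(3,4,6) by linarith
  then have "0 < k"
    using assms(1) by (simp add: zero_less_mult_iff)
  then have "2 * k \<le> e * k"
    using assms(1) by simp
  then have "k < d"
    using assms(3,4,6) by linarith
  have "[e * k = 1] (mod d)"
    unfolding cong_iff_dvd_diff using assms(6)[symmetric] by simp
  then have "[e * e' = e * k] (mod d)"
    using assms(5) cong_sym cong_trans by blast
  then have "[e' = k] (mod d)"
    using cong_mult_lcancel[OF assms(2)] by blast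
  then have "e' = k"
    using assms(3,4) \<open>0 < k\<close> \<open>k < d\<close> by (simp add: cong_less_imp_eq_int)
  with assms(6) show ?thesis
    by simp
qed

lemma two_le_card_box_solutions:
  fixes d e e' :: int
  assumes "1 < e" and "e < d" and "0 < e'" and "[e * e' = 1] (mod d)"
    and "\<not> e dvd d + 1"
  shows "2 \<le> card (box_solutions d e e')"
proof -
  have "{(e - 1, e' - 1), (d mod e, d div e)} \<subseteq> box_solutions d e e'"
    using corner_in_box_solutions[OF assms(1,3,4)]
      division_in_box_solutions[OF _ assms(2) less_mult_inverse[OF assms(1,3,4)]] assms(1)
    by simp
  then have "card {(e - 1, e' - 1), (d mod e, d div e)} \<le> card (box_solutions d e e')"
    by (rule card_mono[OF finite_box_solutions])
  moreover have "d mod e \<noteq> e - 1"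
    using assms(5) dvd_succ_if_mod_eq_pred by blast
  ultimately show ?thesis
    by simp
qed

lemma card_box_solutions_le_1:
  fixes d e e' :: int
  assumes "0 < e" and "coprime e d" and "0 < e'" and "e' < d"
    and "[e * e' = 1] (mod d)" and "e dvd d + 1"
  shows "card (box_solutions d e e') \<le> 1"
proof (cases "e = 1")
  case True
  with assms(4) show ?thesis
    by (simp add: box_solutions_one_eq_empty)
next
  case False
  with assms(1) have "1 < e"
    by simp
  obtain k where "d + 1 = e * k"
    using assms(6) by blast
  then have "e * e' = d + 1"
    using mult_inverse_eq_succ[OF \<open>1 < e\<close> assms(2-5)] by blast
  then have "card (box_solutions d e e') \<le> card {(e - 1, e' - 1)}"
    using box_solutions_subset_corner[OF assms(1)] by (intro card_mono) auto
  then show ?thesis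
    by simp
qed

theorem lemma5p3:
  fixes d e e' :: int
  assumes "0 < e" and "e < d" and "coprime e d"
    and "0 < e'" and "e' < d" and "[e * e' = 1] (mod d)"
  shows "card {(i::int, j::int). 0 \<le> i \<and> 0 \<le> j \<and> (i, j) \<noteq> (0, 0)
                \<and> [i + e * j = 0] (mod d) \<and> i < e \<and> j < e'} \<le> 1
         \<longleftrightarrow> e dvd d + 1"
  unfolding box_solutions_def[symmetric]
proof
  assume card: "card (box_solutions d e e') \<le> 1"
  show "e dvd d + 1"
  proof (rule ccontr)
    assume ndvd: "\<not> e dvd d + 1"
    then have "1 < e"
      using assms(1) by (cases "e = 1") auto
    with card show False
      using two_le_card_box_solutions[OF _ assms(2,4,6) ndvd] by simp
  qed
next
  assume "e dvd d + 1"
  then show "card (box_solutions d e e') \<le> 1"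
    by (rule card_box_solutions_le_1[OF assms(1,3-6)])
qed

end
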